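(* Let $s$ be a real-valued function with $s(t)=0$ for $t\notin[0,T_s]$ and $\int_0^{T_s}s(t)^2dt=1$, and let $\tau\in(0,T_s)$. Assume the matrix $\tilde T(\omega)$ defined in the context is positive definite for every $\omega\in[-\pi,\pi]$. Then for every $\rho_0>0$ and all nonzero complex numbers $\alpha_1,\alpha_2$, $$I_{E\text{-}MacA}>\log\left(1+\rho_0(|\alpha_1|^2+|\alpha_2|^2)\right).$$ The right-hand side is the mutual information of the synchronous space-time-coded $2\times1$ relay–destination link.
   Context: Let $S(t)=[s(t),s(t-\tau)]^T$ and $G(k)=\int_{-\infty}^{\infty}S(t)S(t-kT_s)^Tdt$ for $k\in\mathbb Z$. Define $\tilde T(\omega)=\sum_{k\in\mathbb Z}G(k)e^{-jk\omega}$ for $\omega\in[-\pi,\pi]$, a Hermitian $2\times 2$ matrix. For $s$ supported in $[0,T_s]$, its diagonal entries satisfy $\tilde T_{11}(\omega)=\tilde T_{22}(\omega)=1$. Define $$I_{E\text{-}MacA}=\frac1{2\pi}\int_{-\pi}^{\pi}\log\left(1+\rho_0(|\alpha_1|^2+|\alpha_2|^2)\tilde T_{11}(\omega)+\rho_0^2|\alpha_1|^2|\alpha_2|^2\det\tilde T(\omega)\right)d\omega.$$ *)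

theory Defs
  imports "HOL-Analysis.Analysis"
begin

definition Svec :: "(real \<Rightarrow> real) \<Rightarrow> real \<Rightarrow> real \<Rightarrow> real^2" where
  "Svec s tau t = vector [s t, s (t - tau)]"

definition Gmat :: "(real \<Rightarrow> real) \<Rightarrow> real \<Rightarrow> real \<Rightarrow> int \<Rightarrow> real^2^2" where
  "Gmat s tau Ts k = (\<chi> i j. LINT t|lborel. Svec s tau t $ i * Svec s tau (t - real_of_int k * Ts) $ j)"

definition Ttil :: "(real \<Rightarrow> real) \<Rightarrow> real \<Rightarrow> real \<Rightarrow> real \<Rightarrow> complex^2^2" where
  "Ttil s tau Ts \<omega> = (\<chi> i j. \<Sum>\<^sub>\<infinity>k\<in>(UNIV::int set).
       complex_of_real (Gmat s tau Ts k $ i $ j) * cis (- real_of_int k * \<omega>))"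

definition cmat_pos_def :: "complex^'n^'n \<Rightarrow> bool" where
  "cmat_pos_def A \<longleftrightarrow> (\<forall>i j. A $ j $ i = cnj (A $ i $ j)) \<and>
     (\<forall>v::complex^'n. v \<noteq> 0 \<longrightarrow>
        (let q = (\<Sum>i\<in>UNIV. \<Sum>j\<in>UNIV. cnj (v $ i) * A $ i $ j * v $ j) in Im q = 0 \<and> Re q > 0))"

text \<open>I_{E-MacA} (natural logarithm; the integrand is real since T~ is Hermitian)\<close>
definition I_EMacA :: "(real \<Rightarrow> real) \<Rightarrow> real \<Rightarrow> real \<Rightarrow> real \<Rightarrow> complex \<Rightarrow> complex \<Rightarrow> real" where
  "I_EMacA s tau Ts \<rho>0 \<alpha>1 \<alpha>2 = (1 / (2 * pi)) *
     (LINT \<omega>:{-pi..pi}|lborel.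
        ln (1 + \<rho>0 * ((cmod \<alpha>1)\<^sup>2 + (cmod \<alpha>2)\<^sup>2) * Re (Ttil s tau Ts \<omega> $ 1 $ 1)
             + \<rho>0\<^sup>2 * (cmod \<alpha>1)\<^sup>2 * (cmod \<alpha>2)\<^sup>2 * Re (det (Ttil s tau Ts \<omega>))))"

end

theory Submission
  imports Defs
begin

text \<open>
  Because the pulse s vanishes outside [0, Ts] and 0 < tau < Ts, the
  correlation matrices G(k) are almost all zero: the diagonal entries vanish for k \<noteq> 0
  (the two shifted copies of s overlap in at most one point) and the off-diagonal entry
  G(k)_12 vanishes for k \<notin> {0, -1}.  Hence the series defining T~(omega) are finite:
  T~_11 = G(0)_11 = 1 (the unit energy of s), T~_22 is constant and T~_12 is a
  trigonometric polynomial of degree one, so det T~ is continuous in omega.  Positive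
  definiteness of the Hermitian 2x2 matrix T~(omega) gives det T~(omega) > 0, so the
  integrand of I_EMacA is continuous on [-pi, pi] and strictly exceeds
  log (1 + rho0 (|alpha1|^2 + |alpha2|^2)) there.  A continuous function that strictly
  exceeds a constant on a nondegenerate interval has strictly larger mean, which is the
  theorem.
\<close>

definition supported_in :: "real \<Rightarrow> (real \<Rightarrow> real) \<Rightarrow> bool" where
  "supported_in Ts s \<longleftrightarrow> (\<forall>t. t \<notin> {0..Ts} \<longrightarrow> s t = 0)"

text \<open>Two copies of such a pulse shifted by at least Ts overlap in at most one point,
  so their product integrates to zero.\<close>
lemma shifted_product_integral_zero:
  fixes s :: "real \<Rightarrow> real" and a b Ts :: real
  assumes supp: "supported_in Ts s" and far: "Ts \<le> \<bar>a - b\<bar>"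
  shows "(LINT t|lborel. s (t - a) * s (t - b)) = 0"
proof -
  have "AE t in lborel. s (t - a) * s (t - b) = 0"
    using AE_lborel_singleton[of "max a b"]
  proof eventually_elim
    case (elim t)
    show ?case
    proof (rule ccontr)
      assume "s (t - a) * s (t - b) \<noteq> 0"
      then have "t - a \<in> {0..Ts}" "t - b \<in> {0..Ts}"
        using supp unfolding supported_in_def by fastforce+
      then show False using far elim by (auto simp: max_def split: if_splits)
    qed
  qed
  then show ?thesis by (simp add: integral_eq_zero_AE)
qed

lemma Gmat_entries:
  "Gmat s \<tau> Ts k $ 1 $ 1 = (LINT t|lborel. s (t - 0) * s (t - k * Ts))"
  "Gmat s \<tau> Ts k $ 2 $ 2 = (LINT t|lborel. s (t - \<tau>) * s (t - (k * Ts + \<tau>)))"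
  "Gmat s \<tau> Ts k $ 1 $ 2 = (LINT t|lborel. s (t - 0) * s (t - (k * Ts + \<tau>)))"
  by (simp_all add: Gmat_def Svec_def algebra_simps)

lemma Gmat_vanishing:
  fixes s :: "real \<Rightarrow> real" and Ts \<tau> :: real and k :: int
  assumes supp: "supported_in Ts s" and tau: "0 < \<tau>" "\<tau> < Ts"
  shows "k \<noteq> 0 \<Longrightarrow> Gmat s \<tau> Ts k $ 1 $ 1 = 0"
    and "k \<noteq> 0 \<Longrightarrow> Gmat s \<tau> Ts k $ 2 $ 2 = 0"
    and "k \<notin> {0, -1} \<Longrightarrow> Gmat s \<tau> Ts k $ 1 $ 2 = 0"
proof -
  have far: "Ts \<le> \<bar>k * Ts\<bar>" if "k \<noteq> 0"
    using that tau by (simp add: abs_mult)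
  show "Gmat s \<tau> Ts k $ 1 $ 1 = 0" if "k \<noteq> 0"
    using far[OF that] unfolding Gmat_entries
    by (intro shifted_product_integral_zero[OF supp]) simp_all
  show "Gmat s \<tau> Ts k $ 2 $ 2 = 0" if "k \<noteq> 0"
    using far[OF that] unfolding Gmat_entries
    by (intro shifted_product_integral_zero[OF supp]) simp_all
  show "Gmat s \<tau> Ts k $ 1 $ 2 = 0" if k_out: "k \<notin> {0, -1}"
  proof -
    consider "k \<ge> 1" | "k \<le> -2" using k_out by fastforce
    then have "Ts \<le> \<bar>0 - (k * Ts + \<tau>)\<bar>"
    proof cases
      case 1
      then have "Ts \<le> k * Ts" using tau by simp
      then show ?thesis using tau by linarith
    next
      case 2
      then have "k * Ts \<le> -2 * Ts" using tau by (intro mult_right_mono) auto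
      then show ?thesis using tau by linarith
    qed
    from shifted_product_integral_zero[OF supp this] show ?thesis
      unfolding Gmat_entries .
  qed
qed

lemma Gmat_0_11:
  assumes supp: "supported_in Ts s"
    and energy: "(LINT t:{0..Ts}|lborel. (s t)\<^sup>2) = 1"
  shows "Gmat s \<tau> Ts 0 $ 1 $ 1 = 1"
proof -
  have "(\<lambda>t. indicator {0..Ts} t *\<^sub>R (s t)\<^sup>2) = (\<lambda>t. s t * s t)"
    using supp by (auto simp: supported_in_def indicator_def power2_eq_square fun_eq_iff)
  then show ?thesis using energy unfolding Gmat_entries set_lebesgue_integral_def by simp
qed

lemma infsum_finite_support:
  fixes f :: "'a \<Rightarrow> 'b::{comm_monoid_add, t2_space}"
  assumes "finite F" "\<And>x. x \<notin> F \<Longrightarrow> f x = 0"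
  shows "infsum f UNIV = sum f F"
proof -
  have "infsum f UNIV = infsum f F" by (rule infsum_cong_neutral) (use assms in auto)
  then show ?thesis using assms by simp
qed

lemma Ttil_11:
  assumes supp: "supported_in Ts s"
    and energy: "(LINT t:{0..Ts}|lborel. (s t)\<^sup>2) = 1" and tau: "0 < \<tau>" "\<tau> < Ts"
  shows "Ttil s \<tau> Ts \<omega> $ 1 $ 1 = 1"
proof -
  have "Ttil s \<tau> Ts \<omega> $ 1 $ 1 = (\<Sum>k\<in>{0}. Gmat s \<tau> Ts k $ 1 $ 1 * cis (- k * \<omega>))"
    unfolding Ttil_def vec_lambda_beta
    by (rule infsum_finite_support) (auto intro: Gmat_vanishing(1)[OF supp tau])
  then show ?thesis by (simp add: Gmat_0_11[OF supp energy])
qed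

lemma Ttil_22:
  assumes supp: "supported_in Ts s" and tau: "0 < \<tau>" "\<tau> < Ts"
  shows "Ttil s \<tau> Ts \<omega> $ 2 $ 2 = Gmat s \<tau> Ts 0 $ 2 $ 2"
proof -
  have "Ttil s \<tau> Ts \<omega> $ 2 $ 2 = (\<Sum>k\<in>{0}. Gmat s \<tau> Ts k $ 2 $ 2 * cis (- k * \<omega>))"
    unfolding Ttil_def vec_lambda_beta
    by (rule infsum_finite_support) (auto intro: Gmat_vanishing(2)[OF supp tau])
  then show ?thesis by simp
qed

lemma Ttil_12:
  assumes supp: "supported_in Ts s" and tau: "0 < \<tau>" "\<tau> < Ts"
  shows "Ttil s \<tau> Ts \<omega> $ 1 $ 2 = Gmat s \<tau> Ts 0 $ 1 $ 2 + Gmat s \<tau> Ts (-1) $ 1 $ 2 * cis \<omega>"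
proof -
  have "Ttil s \<tau> Ts \<omega> $ 1 $ 2 = (\<Sum>k\<in>{0, -1}. Gmat s \<tau> Ts k $ 1 $ 2 * cis (- k * \<omega>))"
    unfolding Ttil_def vec_lambda_beta
    by (rule infsum_finite_support) (auto intro: Gmat_vanishing(3)[OF supp tau])
  then show ?thesis by simp
qed

lemma cmat_pos_def_hermitian:
  "cmat_pos_def A \<Longrightarrow> A $ j $ i = cnj (A $ i $ j)"
  unfolding cmat_pos_def_def by blast

lemma quad_form_2:
  fixes A :: "complex^2^2" and v :: "complex^2"
  shows "(\<Sum>i\<in>UNIV. \<Sum>j\<in>UNIV. cnj (v $ i) * A $ i $ j * v $ j) =
    cnj (v$1) * A$1$1 * v$1 + cnj (v$1) * A$1$2 * v$2 + cnj (v$2) * A$2$1 * v$1 + cnj (v$2) * A$2$2 * v$2"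
  by (simp add: sum_2)

text \<open>A positive definite 2x2 matrix has positive determinant: the quadratic form at
  e1 gives a = A_11 > 0, and at v = (-A_12, a) it equals a * det A.\<close>
lemma cmat_pos_def_2_det_pos:
  fixes A :: "complex^2^2"
  assumes pd: "cmat_pos_def A"
  shows "0 < Re (det A)"
proof -
  define a b d where "a = A$1$1" and "b = A$1$2" and "d = A$2$2"
  have herm: "A$2$1 = cnj b" "cnj a = a"
    unfolding a_def b_def by (rule cmat_pos_def_hermitian[OF pd], metis cmat_pos_def_hermitian[OF pd])
  have q: "0 < Re (\<Sum>i\<in>UNIV. \<Sum>j\<in>UNIV. cnj (v $ i) * A $ i $ j * v $ j)" if "v \<noteq> 0" for v
    using pd that unfolding cmat_pos_def_def Let_def by blast
  have "vector [1, 0] \<noteq> (0::complex^2)" by (metis vector_2(1) zero_index zero_neq_one)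
  from q[OF this] have a_pos: "0 < Re a" by (simp add: quad_form_2 a_def)
  have "a \<in> \<real>" using herm(2) by (metis Reals_cnj_iff)
  then obtain r where r: "a = complex_of_real r" by (auto elim: Reals_cases)
  have "vector [- b, a] \<noteq> (0::complex^2)"
    using a_pos by (metis vector_2(2) zero_complex.sel(1) zero_index less_irrefl)
  from q[OF this] have "0 < Re (a * det A)"
    by (simp add: quad_form_2 det_2 herm flip: a_def b_def d_def) (simp add: algebra_simps herm(2))
  then show ?thesis using a_pos r by (simp add: zero_less_mult_iff)
qed

lemma Re_det_Ttil:
  assumes supp: "supported_in Ts s"
    and energy: "(LINT t:{0..Ts}|lborel. (s t)\<^sup>2) = 1" and tau: "0 < \<tau>" "\<tau> < Ts"
    and herm: "Ttil s \<tau> Ts \<omega> $ 2 $ 1 = cnj (Ttil s \<tau> Ts \<omega> $ 1 $ 2)"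
  shows "Re (det (Ttil s \<tau> Ts \<omega>)) = Gmat s \<tau> Ts 0 $ 2 $ 2 - (cmod (Ttil s \<tau> Ts \<omega> $ 1 $ 2))\<^sup>2"
  by (simp add: det_2 herm Ttil_11[OF supp energy tau] Ttil_22[OF supp tau] cmod_power2)
     (simp add: power2_eq_square)

text \<open>On [-pi, pi], where T~ is Hermitian, Re (det T~) = G(0)_22 - |T~_12|^2 with T~_12 a
  trigonometric polynomial; hence it is continuous there.\<close>
lemma Re_det_Ttil_continuous:
  assumes supp: "supported_in Ts s"
    and energy: "(LINT t:{0..Ts}|lborel. (s t)\<^sup>2) = 1" and tau: "0 < \<tau>" "\<tau> < Ts"
    and pd: "\<And>\<omega>. \<omega> \<in> {-pi..pi} \<Longrightarrow> cmat_pos_def (Ttil s \<tau> Ts \<omega>)"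
  shows "continuous_on {-pi..pi} (\<lambda>\<omega>. Re (det (Ttil s \<tau> Ts \<omega>)))"
proof -
  have "continuous_on {-pi..pi} (\<lambda>\<omega>. Gmat s \<tau> Ts 0 $ 2 $ 2 -
      (cmod (Gmat s \<tau> Ts 0 $ 1 $ 2 + Gmat s \<tau> Ts (-1) $ 1 $ 2 * cis \<omega>))\<^sup>2)"
    by (intro continuous_intros)
  then show ?thesis
    by (rule continuous_on_cong[THEN iffD1, rotated 2])
       (simp_all add: Re_det_Ttil[OF supp energy tau] Ttil_12[OF supp tau] cmat_pos_def_hermitian[OF pd])
qed

lemma set_integral_gt_const:
  fixes h :: "real \<Rightarrow> real"
  assumes "a < b" and cont: "continuous_on {a..b} h" and gt: "\<And>x. x \<in> {a..b} \<Longrightarrow> m < h x"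
  shows "m * (b - a) < (LINT x:{a..b}|lborel. h x)"
proof -
  have "set_integrable lborel {a..b} h"
    unfolding set_integrable_def by (rule borel_integrable_compact[OF compact_Icc cont])
  then have "(LINT x:{a..b}|lborel. h x) = integral {a..b} h"
    by (rule set_borel_integral_eq_integral(2))
  moreover have "integral {a..b} (\<lambda>_. m) < integral {a..b} h"
    using assms by (intro integral_less_real) auto
  ultimately show ?thesis using \<open>a < b\<close> by (simp add: mult.commute)
qed

theorem theorem10:
  fixes s :: "real \<Rightarrow> real" and Ts \<tau> :: real
  assumes supp: "\<And>t. t \<notin> {0..Ts} \<Longrightarrow> s t = 0"
    and energy: "(LINT t:{0..Ts}|lborel. (s t)\<^sup>2) = 1"
    and tau: "0 < \<tau>" "\<tau> < Ts"
    and pd: "\<And>\<omega>. \<omega> \<in> {-pi..pi} \<Longrightarrow> cmat_pos_def (Ttil s \<tau> Ts \<omega>)"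
  shows "\<forall>\<rho>0 > 0. \<forall>\<alpha>1 \<alpha>2 :: complex. \<alpha>1 \<noteq> 0 \<longrightarrow> \<alpha>2 \<noteq> 0 \<longrightarrow>
           I_EMacA s \<tau> Ts \<rho>0 \<alpha>1 \<alpha>2 > ln (1 + \<rho>0 * ((cmod \<alpha>1)\<^sup>2 + (cmod \<alpha>2)\<^sup>2))"
proof (intro allI impI)
  fix \<rho>0 :: real and \<alpha>1 \<alpha>2 :: complex
  assume "\<rho>0 > 0" "\<alpha>1 \<noteq> 0" "\<alpha>2 \<noteq> 0"
  define A where "A = \<rho>0 * ((cmod \<alpha>1)\<^sup>2 + (cmod \<alpha>2)\<^sup>2)"
  define B where "B = \<rho>0\<^sup>2 * (cmod \<alpha>1)\<^sup>2 * (cmod \<alpha>2)\<^sup>2"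
  have "A > 0" "B > 0" using \<open>\<rho>0 > 0\<close> \<open>\<alpha>1 \<noteq> 0\<close> \<open>\<alpha>2 \<noteq> 0\<close> by (simp_all add: A_def B_def add_pos_pos)
  have s_supp: "supported_in Ts s" using supp by (simp add: supported_in_def)
  define g where "g \<omega> = 1 + A + B * Re (det (Ttil s \<tau> Ts \<omega>))" for \<omega>
  have g_gt: "1 + A < g \<omega>" if "\<omega> \<in> {-pi..pi}" for \<omega>
    using cmat_pos_def_2_det_pos[OF pd[OF that]] \<open>B > 0\<close> by (simp add: g_def)
  have g_cont: "continuous_on {-pi..pi} g"
    unfolding g_def by (intro continuous_intros Re_det_Ttil_continuous[OF s_supp energy tau pd])
  \<comment> \<open>the integrand of I_EMacA is ln o g, since T~_11 = 1\<close>
  define h where "h \<omega> = ln (g \<omega>)" for \<omega>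
  have I: "I_EMacA s \<tau> Ts \<rho>0 \<alpha>1 \<alpha>2 = (LINT \<omega>:{-pi..pi}|lborel. h \<omega>) / (2 * pi)"
    by (simp add: I_EMacA_def h_def g_def A_def B_def Ttil_11[OF s_supp energy tau])
  have h_gt: "ln (1 + A) < h \<omega>" if "\<omega> \<in> {-pi..pi}" for \<omega>
    using g_gt[OF that] \<open>A > 0\<close> by (simp add: h_def)
  have "continuous_on {-pi..pi} h"
    unfolding h_def using g_gt \<open>A > 0\<close>
    by (intro continuous_on_ln g_cont) force
  then have "ln (1 + A) * (pi - - pi) < (LINT \<omega>:{-pi..pi}|lborel. h \<omega>)"
    by (intro set_integral_gt_const h_gt) auto
  then show "I_EMacA s \<tau> Ts \<rho>0 \<alpha>1 \<alpha>2 > ln (1 + \<rho>0 * ((cmod \<alpha>1)\<^sup>2 + (cmod \<alpha>2)\<^sup>2))"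
    unfolding I A_def[symmetric] by (simp add: field_simps)
qed

end
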